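(* Let $m\ge 1$, $S=\{1,\dots,2m+1\}$, $x_0=\{1,\dots,m\}$. For subsets $y,z\subseteq S$ put $\varrho(y,z)=(|x_0\cap y|,\,|x_0\cap z|,\,|y\cap z|,\,|x_0\cap y\cap z|)$. For $a,b\in\{m,m+1\}$ let $\mathcal{I}_{(a,b)}=\{\varrho(y,z): y\in\binom{S}{a},\ z\in\binom{S}{b}\}$. Then: (i) $\mathcal{I}_{(m,m)}$ is the set of integer four-tuples $(i,j,t,p)$ with $0\le i,j\le m$, $\max\{i+j-m,\,m-1-i-j\}\le t\le m-|i-j|$, and $\max\{0,\,i+j-m,\,i+t-m,\,j+t-m\}\le p\le \min\{i,\,j,\,t,\,i+j+t+1-m\}$. (ii) $\mathcal{I}_{(m,m+1)}$ is the set of integer four-tuples $(i,j,t,p)$ with $0\le i,j\le m$, $|i+j-m|\le t\le m-\max\{i-j,\,j-i-1\}$, and $i-\min\{i,\,m-j,\,m-t,\,i-j-t+m+1\}\le p\le i-\max\{0,\,i-j,\,i-t,\,m-j-t\}$. (iii) $\mathcal{I}_{(m+1,m)}$ is the set of integer four-tuples $(i,j,t,p)$ with $0\le i,j\le m$, $|i+j-m|\le t\le m-\max\{i-j-1,\,j-i\}$, and $j-\min\{m-i,\,j,\,m-t,\,j-i-t+m+1\}\le p\le j-\max\{0,\,j-i,\,j-t,\,m-i-t\}$. (iv) $\mathcal{I}_{(m+1,m+1)}$ is the set of integer four-tuples $(i,j,t,p)$ with $0\le i,j\le m$, $1+\max\{i+j-m-1,\,m-i-j\}\le t\le m+1-|i-j|$,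 and $i+j-m+\max\{0,\,m-i-j,\,t-i-1,\,t-j-1\}\le p\le i+j-m+\min\{m-i,\,m-j,\,t-1,\,m-i-j+t\}$. Moreover, each of the four sets $\mathcal{I}_{(m,m)},\mathcal{I}_{(m,m+1)},\mathcal{I}_{(m+1,m)},\mathcal{I}_{(m+1,m+1)}$ has cardinality $\binom{m+4}{4}$.
   Context: $\binom{S}{a}$ denotes the collection of $a$-element subsets of $S$. *)

theory Defs
  imports Main
begin

definition ksubsets :: "'a set \<Rightarrow> nat \<Rightarrow> 'a set set" where
  "ksubsets S a = {y. y \<subseteq> S \<and> card y = a}"

definition rho :: "nat set \<Rightarrow> nat set \<Rightarrow> nat set \<Rightarrow> int \<times> int \<times> int \<times> int" where
  "rho x0 y z = (int (card (x0 \<inter> y)), int (card (x0 \<inter> z)), int (card (y \<inter> z)),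
                 int (card (x0 \<inter> y \<inter> z)))"

definition Iset :: "nat \<Rightarrow> nat \<Rightarrow> nat \<Rightarrow> (int \<times> int \<times> int \<times> int) set" where
  "Iset m a b = {rho {1..m} y z | y z. y \<in> ksubsets {1..2*m+1} a \<and> z \<in> ksubsets {1..2*m+1} b}"

end

theory Submission
  imports Defs
begin

text \<open>
  Split S into x0 and C = {m+1..2m+1}. The traces of y and z on x0 and on C can be chosen
  independently, and two subsets of an n-element set can have (|y|, |z|, |y \<inter> z|) = (k, l, r)
  exactly when 0 \<le> r \<le> k, l and k + l \<le> n + r. So I_(a,b) is the lattice polytope given by
  these inequalities for (i, j, p) on x0 and for (a - i, b - j, t - p) on C, and the four
  descriptions are this polytope written out. Complementing z and swapping y with z map the
  four polytopes bijectively onto each other, and I_(m,m) is in bijection with the lattice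
  points of the simplex a, b, c, d \<ge> 0, a + b + c + d \<le> m, counted by (m+4 choose 4).
\<close>

definition realizable_profile :: "nat \<Rightarrow> int \<Rightarrow> int \<Rightarrow> int \<Rightarrow> bool" where
  "realizable_profile n k l r \<longleftrightarrow> 0 \<le> r \<and> r \<le> k \<and> r \<le> l \<and> k + l \<le> int n + r"

lemma realizable_profile_card_Int:
  assumes "finite U"
  shows "realizable_profile (card U)
           (int (card (U \<inter> y))) (int (card (U \<inter> z))) (int (card (U \<inter> y \<inter> z)))"
proof -
  have "card (U \<inter> y) + card (U \<inter> z) = card (U \<inter> (y \<union> z)) + card (U \<inter> y \<inter> z)"
    using card_Un_Int[of "U \<inter> y" "U \<inter> z"] assms by (simp add: Int_Un_distrib Int_ac)
  moreover have "card (U \<inter> (y \<union> z)) \<le> card U"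
    using assms by (intro card_mono) auto
  moreover have "card (U \<inter> y \<inter> z) \<le> card (U \<inter> y)" "card (U \<inter> y \<inter> z) \<le> card (U \<inter> z)"
    using assms by (auto intro: card_mono)
  ultimately show ?thesis
    unfolding realizable_profile_def by linarith
qed

lemma obtain_subsets_with_profile:
  assumes "finite U" and "realizable_profile (card U) k l r"
  obtains y z where "y \<subseteq> U" "z \<subseteq> U"
    and "int (card y) = k" "int (card z) = l" "int (card (y \<inter> z)) = r"
proof -
  from assms(2) have r: "0 \<le> r" "r \<le> k" "r \<le> l" "k + l \<le> int (card U) + r"
    by (auto simp: realizable_profile_def)
  have k_le: "nat k \<le> card U"
    using r by (simp add: nat_le_iff)
  have le: "nat r \<le> nat k" "nat (l - r) \<le> card U - nat k"
    using k_le r by (auto simp: nat_le_iff of_nat_diff intro: nat_mono)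
  obtain y where y: "y \<subseteq> U" "card y = nat k"
    by (rule obtain_subset_with_card_n[OF k_le])
  obtain R where R: "R \<subseteq> y" "card R = nat r"
    by (rule obtain_subset_with_card_n[of "nat r" y]) (use le(1) y(2) in simp_all)
  have "card (U - y) = card U - nat k"
    using y assms(1) by (simp add: card_Diff_subset finite_subset)
  then obtain W where W: "W \<subseteq> U - y" "card W = nat (l - r)"
    using obtain_subset_with_card_n[of "nat (l - r)" "U - y"] le(2) by auto
  have fin: "finite R" "finite W"
    using R W y assms(1) by (meson finite_Diff finite_subset)+
  have "R \<inter> W = {}" "y \<inter> (R \<union> W) = R"
    using R W by auto
  then have "card (R \<union> W) = nat l" "card (y \<inter> (R \<union> W)) = nat r"
    using R W fin r by (simp_all add: card_Un_disjoint)
  with y R W r show ?thesis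
    by (intro that[of y "R \<union> W"]) auto
qed

definition profile_polytope :: "nat \<Rightarrow> nat \<Rightarrow> nat \<Rightarrow> nat \<Rightarrow> (int \<times> int \<times> int \<times> int) set" where
  "profile_polytope n\<^sub>1 n\<^sub>2 a b = {(i, j, t, p). realizable_profile n\<^sub>1 i j p
     \<and> realizable_profile n\<^sub>2 (int a - i) (int b - j) (t - p)}"

lemma card_eq_card_Int_add_card_Int:
  assumes "finite X" "finite C" "X \<inter> C = {}" "w \<subseteq> X \<union> C"
  shows "card w = card (X \<inter> w) + card (C \<inter> w)"
proof -
  have "w = (X \<inter> w) \<union> (C \<inter> w)"
    using assms(4) by blast
  then show ?thesis
    using assms(1-3) card_Un_disjoint[of "X \<inter> w" "C \<inter> w"] by auto
qed

lemma rho_image_eq_profile_polytope: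
  fixes X C :: "nat set"
  assumes X: "finite X" and C: "finite C" and disj: "X \<inter> C = {}"
  shows "{rho X y z | y z. y \<in> ksubsets (X \<union> C) a \<and> z \<in> ksubsets (X \<union> C) b}
         = profile_polytope (card X) (card C) a b"
proof (intro equalityI subsetI)
  fix x
  assume "x \<in> {rho X y z | y z. y \<in> ksubsets (X \<union> C) a \<and> z \<in> ksubsets (X \<union> C) b}"
  then obtain y z where x: "x = rho X y z" and y: "y \<subseteq> X \<union> C" "card y = a"
    and z: "z \<subseteq> X \<union> C" "card z = b"
    by (auto simp: ksubsets_def)
  have "card (y \<inter> z) = card (X \<inter> y \<inter> z) + card (C \<inter> y \<inter> z)"
    using card_eq_card_Int_add_card_Int[OF X C disj, of "y \<inter> z"] y by (auto simp: Int_assoc)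
  moreover have "a = card (X \<inter> y) + card (C \<inter> y)" "b = card (X \<inter> z) + card (C \<inter> z)"
    using card_eq_card_Int_add_card_Int[OF X C disj] y z by auto
  ultimately show "x \<in> profile_polytope (card X) (card C) a b"
    using realizable_profile_card_Int[OF X, of y z] realizable_profile_card_Int[OF C, of y z]
    by (simp add: x rho_def profile_polytope_def)
next
  fix x
  assume "x \<in> profile_polytope (card X) (card C) a b"
  then obtain i j t p where x: "x = (i, j, t, p)"
    and pX: "realizable_profile (card X) i j p"
    and pC: "realizable_profile (card C) (int a - i) (int b - j) (t - p)"
    by (auto simp: profile_polytope_def)
  obtain yX zX where X_sets: "yX \<subseteq> X" "zX \<subseteq> X"
    and X_cards: "int (card yX) = i" "int (card zX) = j" "int (card (yX \<inter> zX)) = p"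
    by (rule obtain_subsets_with_profile[OF X pX])
  obtain yC zC where C_sets: "yC \<subseteq> C" "zC \<subseteq> C"
    and C_cards: "int (card yC) = int a - i" "int (card zC) = int b - j"
      "int (card (yC \<inter> zC)) = t - p"
    by (rule obtain_subsets_with_profile[OF C pC])
  define y where "y = yX \<union> yC"
  define z where "z = zX \<union> zC"
  have fin: "finite yX" "finite zX" "finite yC" "finite zC"
    using X_sets C_sets X C finite_subset by blast+
  have traces: "X \<inter> y = yX" "X \<inter> z = zX" "X \<inter> y \<inter> z = yX \<inter> zX"
    "y \<inter> z = (yX \<inter> zX) \<union> (yC \<inter> zC)"
    using X_sets C_sets disj by (auto simp: y_def z_def)
  have "card y = card yX + card yC" "card z = card zX + card zC"
    "card (y \<inter> z) = card (yX \<inter> zX) + card (yC \<inter> zC)"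
    unfolding traces(4) unfolding y_def z_def using X_sets C_sets disj fin
    by (auto intro!: card_Un_disjoint)
  then have "y \<in> ksubsets (X \<union> C) a" "z \<in> ksubsets (X \<union> C) b" "rho X y z = x"
    using X_sets C_sets X_cards C_cards traces
    by (auto simp: ksubsets_def y_def z_def rho_def x)
  then show "x \<in> {rho X y z | y z. y \<in> ksubsets (X \<union> C) a \<and> z \<in> ksubsets (X \<union> C) b}"
    by blast
qed

lemma Iset_eq_profile_polytope: "Iset m a b = profile_polytope m (m + 1) a b"
proof -
  have "{1..2 * m + 1} = {1..m} \<union> {m + 1..2 * m + 1}" "card {m + 1..2 * m + 1} = m + 1"
    by auto
  then show ?thesis
    using rho_image_eq_profile_polytope[of "{1..m}" "{m + 1..2 * m + 1}" a b]
    by (simp add: Iset_def)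
qed

lemma profile_polytope_m_m_eq:
  "profile_polytope m (m + 1) m m =
   {(i, j, t, p). 0 \<le> i \<and> i \<le> int m \<and> 0 \<le> j \<and> j \<le> int m
      \<and> max (i + j - int m) (int m - 1 - i - j) \<le> t \<and> t \<le> int m - \<bar>i - j\<bar>
      \<and> max (max 0 (i + j - int m)) (max (i + t - int m) (j + t - int m)) \<le> p
      \<and> p \<le> min (min i j) (min t (i + j + t + 1 - int m))}"
  unfolding profile_polytope_def realizable_profile_def
  by (rule set_eqI) (clarsimp simp: max_def min_def abs_if; arith)

lemma profile_polytope_m_m1_eq:
  "profile_polytope m (m + 1) m (m + 1) =
   {(i, j, t, p). 0 \<le> i \<and> i \<le> int m \<and> 0 \<le> j \<and> j \<le> int m
      \<and> \<bar>i + j - int m\<bar> \<le> t \<and> t \<le> int m - max (i - j) (j - i - 1)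
      \<and> i - min (min i (int m - j)) (min (int m - t) (i - j - t + int m + 1)) \<le> p
      \<and> p \<le> i - max (max 0 (i - j)) (max (i - t) (int m - j - t))}"
  unfolding profile_polytope_def realizable_profile_def
  by (rule set_eqI) (clarsimp simp: max_def min_def abs_if; arith)

lemma profile_polytope_m1_m_eq:
  "profile_polytope m (m + 1) (m + 1) m =
   {(i, j, t, p). 0 \<le> i \<and> i \<le> int m \<and> 0 \<le> j \<and> j \<le> int m
      \<and> \<bar>i + j - int m\<bar> \<le> t \<and> t \<le> int m - max (i - j - 1) (j - i)
      \<and> j - min (min (int m - i) j) (min (int m - t) (j - i - t + int m + 1)) \<le> p
      \<and> p \<le> j - max (max 0 (j - i)) (max (j - t) (int m - i - t))}"
  unfolding profile_polytope_def realizable_profile_def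
  by (rule set_eqI) (clarsimp simp: max_def min_def abs_if; arith)

lemma profile_polytope_m1_m1_eq:
  "profile_polytope m (m + 1) (m + 1) (m + 1) =
   {(i, j, t, p). 0 \<le> i \<and> i \<le> int m \<and> 0 \<le> j \<and> j \<le> int m
      \<and> 1 + max (i + j - int m - 1) (int m - i - j) \<le> t \<and> t \<le> int m + 1 - \<bar>i - j\<bar>
      \<and> i + j - int m + max (max 0 (int m - i - j)) (max (t - i - 1) (t - j - 1)) \<le> p
      \<and> p \<le> i + j - int m + min (min (int m - i) (int m - j)) (min (t - 1) (int m - i - j + t))}"
  unfolding profile_polytope_def realizable_profile_def
  by (rule set_eqI) (clarsimp simp: max_def min_def abs_if; arith)

lemma realizable_profile_complement:
  "realizable_profile n k (int n - l) (k - r) \<longleftrightarrow> realizable_profile n k l r"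
  by (auto simp: realizable_profile_def)

lemma realizable_profile_swap:
  "realizable_profile n l k r \<longleftrightarrow> realizable_profile n k l r"
  by (auto simp: realizable_profile_def)

lemma card_profile_polytope_complement:
  assumes "b \<le> n\<^sub>1 + n\<^sub>2"
  shows "card (profile_polytope n\<^sub>1 n\<^sub>2 a (n\<^sub>1 + n\<^sub>2 - b)) = card (profile_polytope n\<^sub>1 n\<^sub>2 a b)"
proof -
  define f where "f = (\<lambda>(i, j, t, p). (i, int n\<^sub>1 - j, int a - t, i - (p :: int)))"
  have maps: "f x \<in> profile_polytope n\<^sub>1 n\<^sub>2 a (n\<^sub>1 + n\<^sub>2 - c)"
    if x_in: "x \<in> profile_polytope n\<^sub>1 n\<^sub>2 a c" and c_le: "c \<le> n\<^sub>1 + n\<^sub>2" for x c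
  proof -
    obtain i j t p where x: "x = (i, j, t, p)" and "realizable_profile n\<^sub>1 i j p"
      and "realizable_profile n\<^sub>2 (int a - i) (int c - j) (t - p)"
      using x_in by (auto simp: profile_polytope_def)
    then have "realizable_profile n\<^sub>1 i (int n\<^sub>1 - j) (i - p)"
      and "realizable_profile n\<^sub>2 (int a - i) (int n\<^sub>2 - (int c - j)) ((int a - i) - (t - p))"
      by (simp_all only: realizable_profile_complement)
    moreover have "int (n\<^sub>1 + n\<^sub>2 - c) - (int n\<^sub>1 - j) = int n\<^sub>2 - (int c - j)"
      using c_le by simp
    ultimately show ?thesis
      by (simp add: x f_def profile_polytope_def algebra_simps)
  qed
  have "bij_betw f (profile_polytope n\<^sub>1 n\<^sub>2 a b) (profile_polytope n\<^sub>1 n\<^sub>2 a (n\<^sub>1 + n\<^sub>2 - b))"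
    by (rule bij_betw_byWitness[where f' = f])
      (use maps[of _ b] maps[of _ "n\<^sub>1 + n\<^sub>2 - b"] assms in \<open>auto simp: f_def\<close>)
  then show ?thesis
    by (simp add: bij_betw_same_card)
qed

lemma card_profile_polytope_swap:
  "card (profile_polytope n\<^sub>1 n\<^sub>2 b a) = card (profile_polytope n\<^sub>1 n\<^sub>2 a b)"
proof -
  define f :: "int \<times> int \<times> int \<times> int \<Rightarrow> _" where "f = (\<lambda>(i, j, t, p). (j, i, t, p))"
  have "bij_betw f (profile_polytope n\<^sub>1 n\<^sub>2 a b) (profile_polytope n\<^sub>1 n\<^sub>2 b a)"
    by (rule bij_betw_byWitness[where f' = f])
      (auto simp: f_def profile_polytope_def realizable_profile_swap)
  then show ?thesis
    by (simp add: bij_betw_same_card)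
qed

definition simplex4 :: "nat \<Rightarrow> (int \<times> int \<times> int \<times> int) set" where
  "simplex4 n = {(a, b, c, d). 0 \<le> a \<and> 0 \<le> b \<and> 0 \<le> c \<and> 0 \<le> d \<and> a + b + c + d \<le> int n}"

lemma length_eq_5_conv: "length l = 5 \<longleftrightarrow> (\<exists>a b c d e. l = [a, b, c, d, e])"
  by (auto simp: numeral_eq_Suc length_Suc_conv)

lemma card_simplex4: "card (simplex4 n) = (n + 4) choose 4"
proof -
  define L where "L = {l :: nat list. length l = 5 \<and> sum_list l = n}"
  define f where "f = (\<lambda>l :: nat list. (int (l ! 0), int (l ! 1), int (l ! 2), int (l ! 3)))"
  have "inj_on f L"
  proof (rule inj_onI)
    fix l l'
    assume "l \<in> L" "l' \<in> L" "f l = f l'"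
    then show "l = l'"
      unfolding L_def length_eq_5_conv by (auto simp: f_def)
  qed
  moreover have "f ` L = simplex4 n"
  proof (intro equalityI subsetI)
    fix x
    assume "x \<in> simplex4 n"
    then obtain a b c d where x: "x = (a, b, c, d)" and "0 \<le> a" "0 \<le> b" "0 \<le> c" "0 \<le> d"
      "a + b + c + d \<le> int n"
      by (auto simp: simplex4_def)
    then have "[nat a, nat b, nat c, nat d, n - nat (a + b + c + d)] \<in> L"
      by (simp add: L_def nat_add_distrib)
    moreover have "x = f [nat a, nat b, nat c, nat d, n - nat (a + b + c + d)]"
      using \<open>0 \<le> a\<close> \<open>0 \<le> b\<close> \<open>0 \<le> c\<close> \<open>0 \<le> d\<close> by (simp add: x f_def)
    ultimately show "x \<in> f ` L"
      by blast
  next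
    fix x
    assume "x \<in> f ` L"
    then obtain a b c d e where "x = f [a, b, c, d, e]" "a + b + c + d + e = n"
      unfolding L_def length_eq_5_conv by auto
    then show "x \<in> simplex4 n"
      by (simp add: simplex4_def f_def)
  qed
  ultimately have "card (simplex4 n) = card L"
    by (metis card_image)
  also have "\<dots> = (n + 4) choose n"
    using card_length_sum_list[of 5 n] by (simp add: L_def add.commute)
  also have "\<dots> = (n + 4) choose 4"
    by (rule binomial_symmetric[of n "n + 4", simplified])
  finally show ?thesis .
qed

text \<open>
  A point (i, j, t, p) of I_(m,m) is determined by the Venn counts
  (\<alpha>, \<beta>, \<gamma>, \<delta>) = (p, i - p, j - p, m - i - j + p) of y and z inside x0, which sum to m,
  together with e = (t - p) - \<delta>, and the constraints on e read
  max (-\<delta>) (-\<alpha> - 1) \<le> e \<le> min \<beta> \<gamma>. The case e \<ge> 0 is sent to the even point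
  (\<alpha>, \<beta> - e, \<gamma> - e, 2e) of the simplex, the case e < 0 to the odd point
  (\<alpha> + 1 + e, \<beta>, \<gamma>, -2e - 1).
\<close>

definition venn_to_simplex :: "nat \<Rightarrow> int \<times> int \<times> int \<times> int \<Rightarrow> int \<times> int \<times> int \<times> int" where
  "venn_to_simplex m = (\<lambda>(i, j, t, p). let e = t + i + j - 2 * p - int m in
     if 0 \<le> e then (p, i - p - e, j - p - e, 2 * e) else (p + 1 + e, i - p, j - p, - 2 * e - 1))"

definition simplex_to_venn :: "nat \<Rightarrow> int \<times> int \<times> int \<times> int \<Rightarrow> int \<times> int \<times> int \<times> int" where
  "simplex_to_venn m = (\<lambda>(a, b, c, d).
     if even d then (a + b + d div 2, a + c + d div 2, int m - b - c - d div 2, a)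
     else (a + b + (d - 1) div 2, a + c + (d - 1) div 2, int m - b - c - (d + 1) div 2, a + (d - 1) div 2))"

lemma simplex_to_venn_even:
  "simplex_to_venn m (a, b, c, 2 * k) = (a + b + k, a + c + k, int m - b - c - k, a)"
  by (simp add: simplex_to_venn_def)

lemma simplex_to_venn_odd:
  "simplex_to_venn m (a, b, c, 2 * k + 1) = (a + b + k, a + c + k, int m - b - c - (k + 1), a + k)"
  by (simp add: simplex_to_venn_def)

lemma simplex_to_venn_venn_to_simplex: "simplex_to_venn m (venn_to_simplex m x) = x"
proof -
  obtain i j t p where x: "x = (i, j, t, p)"
    by (cases x) auto
  define e where "e = t + i + j - 2 * p - int m"
  show ?thesis
  proof (cases "0 \<le> e")
    case True
    then show ?thesis
      by (simp add: x venn_to_simplex_def simplex_to_venn_def Let_def e_def[symmetric])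
        (simp add: e_def)
  next
    case False
    then have "venn_to_simplex m x = (p + 1 + e, i - p, j - p, 2 * (- e - 1) + 1)"
      unfolding x venn_to_simplex_def Let_def case_prod_conv e_def[symmetric] by simp
    then show ?thesis
      using simplex_to_venn_odd[of m "p + 1 + e" "i - p" "j - p" "- e - 1"] by (simp add: x e_def)
  qed
qed

lemma venn_to_simplex_simplex_to_venn:
  assumes "0 \<le> d"
  shows "venn_to_simplex m (simplex_to_venn m (a, b, c, d)) = (a, b, c, d)"
proof (cases "even d")
  case True
  then obtain k where "d = 2 * k"
    by blast
  with assms show ?thesis
    by (simp add: simplex_to_venn_even venn_to_simplex_def)
next
  case False
  then obtain k where "d = 2 * k + 1"
    using oddE by blast
  with assms show ?thesis
    by (simp add: simplex_to_venn_odd venn_to_simplex_def Let_def)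
qed

lemma venn_to_simplex_mem:
  "x \<in> profile_polytope m (m + 1) m m \<Longrightarrow> venn_to_simplex m x \<in> simplex4 m"
  by (auto simp: venn_to_simplex_def profile_polytope_def realizable_profile_def simplex4_def Let_def
      split: if_splits)

lemma simplex_to_venn_mem:
  assumes "x \<in> simplex4 m"
  shows "simplex_to_venn m x \<in> profile_polytope m (m + 1) m m"
proof -
  obtain a b c d where x: "x = (a, b, c, d)"
    by (cases x) auto
  show ?thesis
  proof (cases "even d")
    case True
    then obtain k where "d = 2 * k"
      by blast
    with assms show ?thesis
      by (simp add: x simplex_to_venn_even simplex4_def profile_polytope_def realizable_profile_def)
  next
    case False
    then obtain k where "d = 2 * k + 1"
      using oddE by blast
    with assms show ?thesis
      by (simp add: x simplex_to_venn_odd simplex4_def profile_polytope_def realizable_profile_def)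
  qed
qed

lemma bij_betw_venn_to_simplex:
  "bij_betw (venn_to_simplex m) (profile_polytope m (m + 1) m m) (simplex4 m)"
proof (rule bij_betw_byWitness[where f' = "simplex_to_venn m"])
  show "\<forall>x\<in>simplex4 m. venn_to_simplex m (simplex_to_venn m x) = x"
    by (auto simp: simplex4_def venn_to_simplex_simplex_to_venn)
  show "simplex_to_venn m ` simplex4 m \<subseteq> profile_polytope m (m + 1) m m"
    by (rule image_subsetI) (rule simplex_to_venn_mem)
qed (auto simp: simplex_to_venn_venn_to_simplex venn_to_simplex_mem)

lemma card_profile_polytope_m_m: "card (profile_polytope m (m + 1) m m) = (m + 4) choose 4"
  using bij_betw_same_card[OF bij_betw_venn_to_simplex] card_simplex4 by simp

theorem proposition3p1:
  fixes m :: nat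
  assumes "m \<ge> 1"
  shows "(Iset m m m = {(i, j, t, p). 0 \<le> i \<and> i \<le> int m \<and> 0 \<le> j \<and> j \<le> int m
            \<and> max (i + j - int m) (int m - 1 - i - j) \<le> t \<and> t \<le> int m - \<bar>i - j\<bar>
            \<and> max (max 0 (i + j - int m)) (max (i + t - int m) (j + t - int m)) \<le> p
            \<and> p \<le> min (min i j) (min t (i + j + t + 1 - int m))})
    \<and> (Iset m m (m+1) = {(i, j, t, p). 0 \<le> i \<and> i \<le> int m \<and> 0 \<le> j \<and> j \<le> int m
            \<and> \<bar>i + j - int m\<bar> \<le> t \<and> t \<le> int m - max (i - j) (j - i - 1)
            \<and> i - min (min i (int m - j)) (min (int m - t) (i - j - t + int m + 1)) \<le> p
            \<and> p \<le> i - max (max 0 (i - j)) (max (i - t) (int m - j - t))})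
    \<and> (Iset m (m+1) m = {(i, j, t, p). 0 \<le> i \<and> i \<le> int m \<and> 0 \<le> j \<and> j \<le> int m
            \<and> \<bar>i + j - int m\<bar> \<le> t \<and> t \<le> int m - max (i - j - 1) (j - i)
            \<and> j - min (min (int m - i) j) (min (int m - t) (j - i - t + int m + 1)) \<le> p
            \<and> p \<le> j - max (max 0 (j - i)) (max (j - t) (int m - i - t))})
    \<and> (Iset m (m+1) (m+1) = {(i, j, t, p). 0 \<le> i \<and> i \<le> int m \<and> 0 \<le> j \<and> j \<le> int m
            \<and> 1 + max (i + j - int m - 1) (int m - i - j) \<le> t \<and> t \<le> int m + 1 - \<bar>i - j\<bar>
            \<and> i + j - int m + max (max 0 (int m - i - j)) (max (t - i - 1) (t - j - 1)) \<le> p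
            \<and> p \<le> i + j - int m + min (min (int m - i) (int m - j)) (min (t - 1) (int m - i - j + t))})
    \<and> (card (Iset m m m) = (m + 4) choose 4)
    \<and> (card (Iset m m (m+1)) = (m + 4) choose 4)
    \<and> (card (Iset m (m+1) m) = (m + 4) choose 4)
    \<and> (card (Iset m (m+1) (m+1)) = (m + 4) choose 4)"
proof -
  have mm: "card (profile_polytope m (m + 1) m m) = (m + 4) choose 4"
    by (rule card_profile_polytope_m_m)
  then have mm1: "card (profile_polytope m (m + 1) m (m + 1)) = (m + 4) choose 4"
    using card_profile_polytope_complement[of m m "m + 1" m] by simp
  then have m1m: "card (profile_polytope m (m + 1) (m + 1) m) = (m + 4) choose 4"
    by (simp only: card_profile_polytope_swap)
  then have m1m1: "card (profile_polytope m (m + 1) (m + 1) (m + 1)) = (m + 4) choose 4"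
    using card_profile_polytope_complement[of m m "m + 1" "m + 1"] by simp
  show ?thesis
    unfolding Iset_eq_profile_polytope
    by (intro conjI profile_polytope_m_m_eq profile_polytope_m_m1_eq profile_polytope_m1_m_eq
        profile_polytope_m1_m1_eq mm mm1 m1m m1m1)
qed

end
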